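(* Let $a<b$ and let $\phi:[a,b]^n\to\mathbb{R}$ be permutation-invariant, such that its convex envelope over $[a,b]^n$ coincides with the convex envelope over $[a,b]^n$ of its restriction to $\{a,b\}^n$ (the function equal to $\phi$ on $\{a,b\}^n$ and $+\infty$ elsewhere). For $i=1,\dots,n$ and $j=0,\dots,n$, let $p_{ij}=a$ if $i>j$ and $p_{ij}=b$ otherwise, and let $p_{\cdot j}\in\mathbb{R}^n$ be the $j$-th column. Define $f(x)=\phi(p_{\cdot0})+\sum_{i=1}^n\frac{x_i-a}{b-a}\big(\phi(p_{\cdot i})-\phi(p_{\cdot i-1})\big)$. Then for every $x\in[a,b]^n$, $$\mathrm{conv}_{[a,b]^n}(\phi)(x)=\min\{f(u)\mid u\ge_m x,\ b\ge u_1\ge\dots\ge u_n\ge a\}.$$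
   Context: $\mathrm{conv}_C(\phi)$ denotes the convex envelope (largest convex underestimator) of $\phi$ over $C$. $\phi$ is permutation-invariant if $\phi(Qx)=\phi(x)$ for all permutation matrices $Q$. $u\ge_m x$ means $\sum_{i=1}^j u_{[i]}\ge\sum_{i=1}^j x_{[i]}$ for $j<n$ with equality for $j=n$ ($v_{[i]}$ the $i$-th largest entry). *)

theory Defs
  imports "HOL-Analysis.Analysis" "HOL-Library.Extended_Real"
begin

text \<open>Vectors in R^n are modelled as real^'n, where the index type 'n is a finite
  linearly ordered type; its order plays the role of the index order 1 < 2 < ... < n.\<close>

definition box_ab :: "real \<Rightarrow> real \<Rightarrow> (real^'n) set" where
  "box_ab a b = {x. \<forall>i. a \<le> x $ i \<and> x $ i \<le> b}"

definition vert_ab :: "real \<Rightarrow> real \<Rightarrow> (real^'n) set" where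
  "vert_ab a b = {x. \<forall>i. x $ i = a \<or> x $ i = b}"

definition conv_env :: "'a::real_vector set \<Rightarrow> ('a \<Rightarrow> ereal) \<Rightarrow> 'a \<Rightarrow> ereal" where
  "conv_env C psi x = (SUP g \<in> {g. convex_on C g \<and> (\<forall>y\<in>C. ereal (g y) \<le> psi y)}. ereal (g x))"

definition perm_invariant_on :: "(real^'n) set \<Rightarrow> (real^'n \<Rightarrow> real) \<Rightarrow> bool" where
  "perm_invariant_on C phi \<longleftrightarrow>
     (\<forall>\<sigma> x. \<sigma> permutes (UNIV :: 'n set) \<longrightarrow> x \<in> C \<longrightarrow> phi (\<chi> i. x $ \<sigma> i) = phi x)"

text \<open>Position (1-based) of an index in the order of 'n.\<close>
definition rank :: "'n::{finite,linorder} \<Rightarrow> nat" where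
  "rank i = card {k. k < i} + 1"

definition dsorted :: "real^'n::{finite,linorder} \<Rightarrow> real list" where
  "dsorted x = rev (sort (map (\<lambda>i. x $ i) (sorted_list_of_set (UNIV :: 'n set))))"

definition majorizes :: "real^'n::{finite,linorder} \<Rightarrow> real^'n::{finite,linorder} \<Rightarrow> bool" where
  "majorizes u x \<longleftrightarrow>
     (\<forall>j. 1 \<le> j \<and> j < length (dsorted x) \<longrightarrow> sum_list (take j (dsorted x)) \<le> sum_list (take j (dsorted u)))
     \<and> sum_list (dsorted u) = sum_list (dsorted x)"

definition pcol :: "real \<Rightarrow> real \<Rightarrow> nat \<Rightarrow> real^'n::{finite,linorder}" where
  "pcol a b j = (\<chi> i. if rank i > j then a else b)"

definition fpw :: "real \<Rightarrow> real \<Rightarrow> (real^'n::{finite,linorder} \<Rightarrow> real) \<Rightarrow> real^'n::{finite,linorder} \<Rightarrow> real" where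
  "fpw a b phi x = phi (pcol a b 0) +
     (\<Sum>i\<in>UNIV. (x $ i - a) / (b - a) * (phi (pcol a b (rank i)) - phi (pcol a b (rank i - 1))))"

end

theory Submission
  imports Defs
begin

text \<open>Upper bound: if \<open>u\<close> is decreasing, lies in \<open>[a,b]\<^sup>n\<close> and majorizes \<open>x\<close>, then by Rado's
  theorem \<open>x\<close> is a convex combination of the permutations of \<open>u\<close>, and each permutation of \<open>u\<close> is
  the convex combination of the equally permuted columns \<open>p\<^sub>\<cdot>\<^sub>k\<close> with weights
  \<open>(u\<^sub>k - u\<^sub>k\<^sub>+\<^sub>1)/(b - a)\<close>, where \<open>u\<^sub>0 = b\<close> and \<open>u\<^sub>n\<^sub>+\<^sub>1 = a\<close>.  By permutation invariance of
  \<open>\<phi>\<close>, every convex minorant \<open>g\<close> of \<open>\<phi>\<close> therefore satisfies \<open>g x \<le> f u\<close>.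

  Lower bound: the optimal value \<open>m y\<close> of the minimisation problem is convex in \<open>y\<close>, because \<open>f\<close>
  is affine and the sum of the \<open>j\<close> largest entries is convex, so convex combinations of feasible
  points are feasible for the convex combination of the data.  At a vertex \<open>y\<close> the decreasing
  rearrangement of \<open>y\<close> is feasible and equals a column \<open>p\<^sub>\<cdot>\<^sub>k\<close>, where \<open>f\<close> agrees with \<open>\<phi>\<close>.  So
  \<open>m\<close> is a convex minorant of \<open>\<phi>\<close> restricted to the vertices, whose envelope is that of \<open>\<phi>\<close>.\<close>

section \<open>Enumerating the index type\<close>

definition idx :: "nat \<Rightarrow> 'n::{finite,linorder}" where
  "idx k = sorted_list_of_set (UNIV::'n set) ! k"

lemma bij_betw_idx: "bij_betw (idx::nat \<Rightarrow> 'n::{finite,linorder}) {..<CARD('n)} UNIV"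
  unfolding idx_def[abs_def] by (rule bij_betw_nth) auto

lemma idx_less_idx:
  "k < m \<Longrightarrow> m < CARD('n) \<Longrightarrow> (idx k::'n::{finite,linorder}) < idx m"
  unfolding idx_def
  by (metis length_sorted_list_of_set sorted_list_of_set.strict_sorted_key_list_of_set sorted_wrt_nth_less)

lemma idx_le_idx_iff:
  "k < CARD('n) \<Longrightarrow> m < CARD('n) \<Longrightarrow> (idx k::'n::{finite,linorder}) \<le> idx m \<longleftrightarrow> k \<le> m"
  by (metis idx_less_idx le_less not_le order_less_asym)

lemma obtain_idx:
  obtains k where "k < CARD('n)" "i = (idx k::'n::{finite,linorder})"
  using bij_betw_idx[where 'n='n] unfolding bij_betw_def by auto

lemma rank_idx:
  assumes "k < CARD('n)"
  shows "rank (idx k::'n::{finite,linorder}) = Suc k"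
proof -
  have "{j. j < (idx k::'n)} = idx ` {..<k}"
  proof safe
    fix j :: 'n
    assume "j < idx k"
    moreover obtain m where "m < CARD('n)" "j = idx m" by (rule obtain_idx)
    ultimately show "j \<in> idx ` {..<k}" using assms by (auto simp: idx_le_idx_iff not_le[symmetric])
  qed (use assms idx_less_idx in blast)
  moreover have "inj_on (idx::nat \<Rightarrow> 'n) {..<k}"
    using bij_betw_idx[where 'n='n] assms by (auto simp: bij_betw_def elim: inj_on_subset)
  ultimately show ?thesis unfolding rank_def by (simp add: card_image)
qed

lemma rank_minus_one_bij: "bij_betw (\<lambda>i::'n::{finite,linorder}. rank i - 1) UNIV {..<CARD('n)}"
proof -
  have "(\<lambda>i::'n. rank i - 1) = inv_into {..<CARD('n)} idx"
  proof
    fix i :: 'n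
    obtain k where "k < CARD('n)" "i = idx k" by (rule obtain_idx)
    then show "rank i - 1 = inv_into {..<CARD('n)} idx i"
      using bij_betw_idx[where 'n='n] by (simp add: rank_idx bij_betw_def)
  qed
  then show ?thesis using bij_betw_inv_into[OF bij_betw_idx] by simp
qed

section \<open>Decreasing rearrangement and sums of largest entries\<close>

lemma length_dsorted [simp]: "length (dsorted (y::real^'n::{finite,linorder})) = CARD('n)"
  by (simp add: dsorted_def)

lemma dsorted_nth_antimono:
  "p \<le> q \<Longrightarrow> q < CARD('n) \<Longrightarrow> dsorted (y::real^'n::{finite,linorder}) ! q \<le> dsorted y ! p"
proof -
  assume "p \<le> q" "q < CARD('n)"
  moreover have "sorted (rev (dsorted y))" by (simp add: dsorted_def)
  ultimately show ?thesis using sorted_rev_nth_mono by (metis length_dsorted)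
qed

lemma map_vec_nth_sorted_list_of_UNIV:
  "map (vec_nth (y::real^'n::{finite,linorder})) (sorted_list_of_set UNIV) = map (\<lambda>k. y $ idx k) [0..<CARD('n)]"
proof -
  have "sorted_list_of_set (UNIV::'n set) = map idx [0..<CARD('n)]"
    unfolding idx_def by (metis length_sorted_list_of_set map_nth)
  then show ?thesis by simp
qed

lemma dsorted_eq_permutation:
  fixes y :: "real^'n::{finite,linorder}"
  obtains \<pi> where "bij_betw \<pi> {..<CARD('n)} (UNIV::'n set)" "\<And>k. k < CARD('n) \<Longrightarrow> dsorted y ! k = y $ \<pi> k"
proof -
  let ?ys = "map (\<lambda>k. y $ idx k) [0..<CARD('n)]"
  have "mset (dsorted y) = mset ?ys"
    unfolding dsorted_def map_vec_nth_sorted_list_of_UNIV by simp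
  then obtain p where p: "p permutes {..<length ?ys}" "permute_list p ?ys = dsorted y"
    using mset_eq_permutation by blast
  then have "p permutes {..<CARD('n)}" by simp
  have "dsorted y ! k = y $ (idx \<circ> p) k" if "k < CARD('n)" for k
  proof -
    have "p k < CARD('n)" using permutes_in_image[OF \<open>p permutes {..<CARD('n)}\<close>] that by simp
    have "dsorted y ! k = permute_list p ?ys ! k" using p(2) by simp
    also have "\<dots> = y $ idx (p k)" using that \<open>p k < CARD('n)\<close> p(1) by (simp add: permute_list_nth)
    finally show ?thesis by simp
  qed
  moreover have "bij_betw (idx \<circ> p) {..<CARD('n)} (UNIV::'n set)"
    using bij_betw_trans[OF permutes_imp_bij[OF \<open>p permutes {..<CARD('n)}\<close>] bij_betw_idx] .
  ultimately show thesis using that by blast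
qed

lemma dsorted_of_antimono:
  assumes "antimono (vec_nth (u::real^'n::{finite,linorder}))"
  shows "dsorted u = map (\<lambda>k. u $ idx k) [0..<CARD('n)]"
proof -
  let ?us = "map (\<lambda>k. u $ idx k) [0..<CARD('n)]"
  have "sorted (rev ?us)"
    unfolding sorted_rev_iff_nth_mono using assms by (auto simp: idx_le_idx_iff antimono_def)
  then have "sort ?us = rev ?us" by (intro properties_for_sort) auto
  then show ?thesis unfolding dsorted_def map_vec_nth_sorted_list_of_UNIV by simp
qed

definition sum_largest :: "real^'n::{finite,linorder} \<Rightarrow> nat \<Rightarrow> real" where
  "sum_largest y j = sum_list (take j (dsorted y))"

lemma sum_largest_eq_sum_dsorted:
  "j \<le> CARD('n) \<Longrightarrow> sum_largest (y::real^'n::{finite,linorder}) j = (\<Sum>k<j. dsorted y ! k)"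
  unfolding sum_largest_def by (simp add: sum_list_sum_nth atLeast0LessThan min_def)

lemma sum_largest_antimono:
  "antimono (vec_nth (u::real^'n::{finite,linorder})) \<Longrightarrow> j \<le> CARD('n) \<Longrightarrow>
     sum_largest u j = (\<Sum>k<j. u $ idx k)"
  by (simp add: sum_largest_eq_sum_dsorted dsorted_of_antimono)

lemma sum_largest_CARD: "sum_largest (y::real^'n::{finite,linorder}) CARD('n) = (\<Sum>i\<in>UNIV. y $ i)"
proof -
  obtain \<pi> where \<pi>: "bij_betw \<pi> {..<CARD('n)} (UNIV::'n set)" "\<And>k. k < CARD('n) \<Longrightarrow> dsorted y ! k = y $ \<pi> k"
    using dsorted_eq_permutation by blast
  have "sum_largest y CARD('n) = (\<Sum>k<CARD('n). y $ \<pi> k)"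
    by (simp add: sum_largest_eq_sum_dsorted \<pi>(2))
  also have "\<dots> = (\<Sum>i\<in>UNIV. y $ i)"
    using sum.reindex_bij_betw[OF \<pi>(1)] by simp
  finally show ?thesis .
qed

lemma sum_subset_le_sum_prefix:
  fixes d :: "nat \<Rightarrow> real"
  assumes d: "\<And>p q. p \<le> q \<Longrightarrow> q < N \<Longrightarrow> d q \<le> d p"
    and S: "S \<subseteq> {..<N}" "card S = j"
  shows "sum d S \<le> sum d {..<j}"
proof (cases "j = 0")
  case True
  then show ?thesis using S finite_subset by fastforce
next
  case False
  let ?A = "{..<j}"
  have fin: "finite S" using S finite_subset by blast
  have "j \<le> N" using S by (metis card_lessThan card_mono finite_lessThan)
  have "card (S - ?A) = card (?A - S)"
    using S(2) fin by (simp add: card_Diff_subset_Int Int_commute)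
  moreover have "sum d (S - ?A) \<le> (\<Sum>_\<in>S - ?A. d (j - 1))"
    by (rule sum_mono) (use S d in auto)
  moreover have "(\<Sum>_\<in>?A - S. d (j - 1)) \<le> sum d (?A - S)"
    by (rule sum_mono) (use False \<open>j \<le> N\<close> d in auto)
  ultimately have "sum d (S - ?A) \<le> sum d (?A - S)" by simp
  moreover have "sum d S = sum d (S \<inter> ?A) + sum d (S - ?A)" by (metis fin sum.Int_Diff)
  moreover have "sum d ?A = sum d (S \<inter> ?A) + sum d (?A - S)"
    by (metis finite_lessThan sum.Int_Diff Int_commute)
  ultimately show ?thesis by linarith
qed

lemma sum_subset_le_sum_largest:
  fixes y :: "real^'n::{finite,linorder}"
  assumes "card S = j"
  shows "(\<Sum>i\<in>S. y $ i) \<le> sum_largest y j"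
proof -
  obtain \<pi> where \<pi>: "bij_betw \<pi> {..<CARD('n)} (UNIV::'n set)" "\<And>k. k < CARD('n) \<Longrightarrow> dsorted y ! k = y $ \<pi> k"
    using dsorted_eq_permutation by blast
  define S' where "S' = {k. k < CARD('n) \<and> \<pi> k \<in> S}"
  have S': "S' \<subseteq> {..<CARD('n)}" "\<pi> ` S' = S" "inj_on \<pi> S'"
    using \<pi>(1) unfolding S'_def bij_betw_def by (force elim: inj_on_subset)+
  have "card S' = j" using card_image[OF S'(3)] S'(2) assms by simp
  have "j \<le> CARD('n)" using assms card_mono[of UNIV S] by simp
  have "(\<Sum>i\<in>S. y $ i) = (\<Sum>k\<in>S'. y $ \<pi> k)"
    using sum.reindex[OF S'(3), of "vec_nth y"] S'(2) by simp
  also have "\<dots> \<le> (\<Sum>k<j. y $ \<pi> k)"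
  proof (rule sum_subset_le_sum_prefix[OF _ S'(1) \<open>card S' = j\<close>])
    show "y $ \<pi> q \<le> y $ \<pi> p" if "p \<le> q" "q < CARD('n)" for p q
      using that \<pi>(2) dsorted_nth_antimono[of p q y] by simp
  qed
  also have "\<dots> = sum_largest y j"
    using \<open>j \<le> CARD('n)\<close> by (simp add: sum_largest_eq_sum_dsorted \<pi>(2))
  finally show ?thesis .
qed

lemma sum_largest_convex:
  fixes x y :: "real^'n::{finite,linorder}"
  assumes "0 \<le> t" "t \<le> 1" "j \<le> CARD('n)"
  shows "sum_largest ((1 - t) *\<^sub>R x + t *\<^sub>R y) j \<le> (1 - t) * sum_largest x j + t * sum_largest y j"
proof -
  let ?z = "(1 - t) *\<^sub>R x + t *\<^sub>R y"
  obtain \<pi> where \<pi>: "bij_betw \<pi> {..<CARD('n)} (UNIV::'n set)" "\<And>k. k < CARD('n) \<Longrightarrow> dsorted ?z ! k = ?z $ \<pi> k"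
    using dsorted_eq_permutation by blast
  have inj: "inj_on \<pi> {..<j}"
    using \<pi>(1) assms(3) unfolding bij_betw_def by (auto elim: inj_on_subset)
  have le: "(\<Sum>k<j. w $ \<pi> k) \<le> sum_largest w j" for w
    using sum_subset_le_sum_largest[of "\<pi> ` {..<j}" j w] inj by (simp add: card_image sum.reindex)
  have "sum_largest ?z j = (1 - t) * (\<Sum>k<j. x $ \<pi> k) + t * (\<Sum>k<j. y $ \<pi> k)"
    using assms(3) by (simp add: sum_largest_eq_sum_dsorted \<pi>(2) sum.distrib sum_distrib_left)
  also have "\<dots> \<le> (1 - t) * sum_largest x j + t * sum_largest y j"
    using le[of x] le[of y] assms by (intro add_mono mult_left_mono) auto
  finally show ?thesis .
qed

lemma majorizes_iff_sum_largest:
  "majorizes (u::real^'n::{finite,linorder}) x \<longleftrightarrow>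
     (\<forall>j. 1 \<le> j \<and> j < CARD('n) \<longrightarrow> sum_largest x j \<le> sum_largest u j) \<and>
     sum_largest u CARD('n) = sum_largest x CARD('n)"
  unfolding majorizes_def sum_largest_def length_dsorted by simp

section \<open>Rado's theorem\<close>

lemma sum_mult_by_parts:
  fixes a d :: "nat \<Rightarrow> real"
  shows "(\<Sum>k<N. a k * d k) = (\<Sum>k<N. (a k - a (Suc k)) * (\<Sum>j<Suc k. d j)) + a N * (\<Sum>j<N. d j)"
  by (induction N) (auto simp: algebra_simps)

lemma sum_mult_nonneg_by_parts:
  fixes a d :: "nat \<Rightarrow> real"
  assumes "\<And>k. Suc k < N \<Longrightarrow> a (Suc k) \<le> a k"
    and "\<And>k. Suc k < N \<Longrightarrow> 0 \<le> (\<Sum>j<Suc k. d j)"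
    and "(\<Sum>j<N. d j) = 0"
  shows "0 \<le> (\<Sum>k<N. a k * d k)"
proof -
  have "0 \<le> (\<Sum>k<N. (a k - a (Suc k)) * (\<Sum>j<Suc k. d j))"
  proof (rule sum_nonneg)
    fix k assume "k \<in> {..<N}"
    then show "0 \<le> (a k - a (Suc k)) * (\<Sum>j<Suc k. d j)"
      using assms by (cases "Suc k = N") auto
  qed
  then show ?thesis unfolding sum_mult_by_parts[of a d N] using assms(3) by simp
qed

text \<open>\<open>\<sigma>\<close> arranges the entries of \<open>u\<close> in the same order as those of \<open>w\<close>; summation by parts
  turns the inequality into the partial-sum conditions of majorization.\<close>

lemma majorized_inner_le_permute:
  fixes u x w :: "real^'n::{finite,linorder}"
  assumes u: "antimono (vec_nth u)" and maj: "majorizes u x"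
  obtains \<sigma> where "\<sigma> permutes UNIV" "inner w x \<le> inner w (\<chi> i. u $ \<sigma> i)"
proof -
  obtain \<pi> where \<pi>: "bij_betw \<pi> {..<CARD('n)} (UNIV::'n set)" "\<And>k. k < CARD('n) \<Longrightarrow> dsorted w ! k = w $ \<pi> k"
    using dsorted_eq_permutation by blast
  define \<sigma> :: "'n \<Rightarrow> 'n" where "\<sigma> i = idx (inv_into {..<CARD('n)} \<pi> i)" for i
  have \<sigma>: "\<sigma> permutes UNIV"
    using bij_betw_trans[OF bij_betw_inv_into[OF \<pi>(1)] bij_betw_idx]
    by (intro bij_imp_permutes) (auto simp: \<sigma>_def[abs_def] comp_def)
  have \<sigma>\<pi>: "\<sigma> (\<pi> k) = idx k" if "k < CARD('n)" for k
    using that \<pi>(1) by (simp add: \<sigma>_def bij_betw_def)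
  have inner_\<pi>: "inner w y = (\<Sum>k<CARD('n). w $ \<pi> k * y $ \<pi> k)" for y
    unfolding inner_vec_def using sum.reindex_bij_betw[OF \<pi>(1), of "\<lambda>i. w $ i * y $ i"] by simp
  have inj_\<pi>: "inj_on \<pi> {..<m}" if "m \<le> CARD('n)" for m
    using \<pi>(1) that by (auto simp: bij_betw_def elim: inj_on_subset)
  define d where "d k = u $ idx k - x $ \<pi> k" for k
  have partial: "(\<Sum>j<m. d j) = sum_largest u m - (\<Sum>i\<in>\<pi> ` {..<m}. x $ i)" if "m \<le> CARD('n)" for m
    using that sum_largest_antimono[OF u that] inj_\<pi>[OF that]
    by (simp add: d_def sum_subtractf sum.reindex)
  have "0 \<le> (\<Sum>k<CARD('n). w $ \<pi> k * d k)"
  proof (rule sum_mult_nonneg_by_parts)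
    fix k assume k: "Suc k < CARD('n)"
    show "w $ \<pi> (Suc k) \<le> w $ \<pi> k" using \<pi>(2) dsorted_nth_antimono[of k "Suc k" w] k by simp
    have "(\<Sum>i\<in>\<pi> ` {..<Suc k}. x $ i) \<le> sum_largest x (Suc k)"
      using inj_\<pi>[of "Suc k"] k by (intro sum_subset_le_sum_largest) (simp add: card_image)
    moreover have "sum_largest x (Suc k) \<le> sum_largest u (Suc k)"
      using maj k by (simp add: majorizes_iff_sum_largest)
    ultimately show "0 \<le> (\<Sum>j<Suc k. d j)" using partial[of "Suc k"] k by simp
  next
    have "\<pi> ` {..<CARD('n)} = UNIV" using \<pi>(1) by (simp add: bij_betw_def)
    then show "(\<Sum>j<CARD('n). d j) = 0"
      using partial[of "CARD('n)"] maj sum_largest_CARD[of x] by (simp add: majorizes_iff_sum_largest)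
  qed
  then have "inner w x \<le> inner w (\<chi> i. u $ \<sigma> i)"
    unfolding inner_\<pi> d_def by (simp add: \<sigma>\<pi> algebra_simps sum_subtractf)
  with \<sigma> show thesis by (rule that)
qed

lemma majorized_in_convex_hull_permutations:
  fixes u x :: "real^'n::{finite,linorder}"
  assumes "antimono (vec_nth u)" "majorizes u x"
  shows "x \<in> convex hull {(\<chi> i. u $ \<sigma> i) | \<sigma>. \<sigma> permutes (UNIV::'n set)}"
proof (rule ccontr)
  let ?P = "{(\<chi> i. u $ \<sigma> i) | \<sigma>. \<sigma> permutes (UNIV::'n set)}"
  assume "x \<notin> convex hull ?P"
  moreover have "finite ?P"
    using finite_permutations[of "UNIV::'n set"] by (simp add: setcompr_eq_image)
  then have "closed (convex hull ?P)"
    by (simp add: compact_imp_closed compact_convex_hull finite_imp_compact)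
  ultimately obtain v c where vc: "inner v x < c" "\<forall>y\<in>convex hull ?P. c < inner v y"
    using separating_hyperplane_closed_point[OF convex_convex_hull] by blast
  obtain \<sigma> where \<sigma>: "\<sigma> permutes UNIV" "inner (- v) x \<le> inner (- v) (\<chi> i. u $ \<sigma> i)"
    by (rule majorized_inner_le_permute[OF assms])
  then have "(\<chi> i. u $ \<sigma> i) \<in> convex hull ?P" by (intro hull_inc) blast
  then show False using vc \<sigma>(2) by fastforce
qed

section \<open>The columns \<open>p\<^sub>\<cdot>\<^sub>j\<close> and the affine function \<open>f\<close>\<close>

lemma pcol_idx:
  "m < CARD('n) \<Longrightarrow> (pcol a b k :: real^'n::{finite,linorder}) $ idx m = (if k \<le> m then a else b)"
  unfolding pcol_def by (simp add: rank_idx)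

lemma pcol_in_box_ab: "a \<le> b \<Longrightarrow> pcol a b k \<in> box_ab a b"
  unfolding box_ab_def pcol_def by auto

lemma permute_in_box_ab: "x \<in> box_ab a b \<Longrightarrow> (\<chi> i. x $ \<sigma> i) \<in> box_ab a b"
  unfolding box_ab_def by auto

lemma box_ab_eq_cbox: "box_ab a b = cbox (vec a) (vec b :: real^'n)"
  unfolding box_ab_def by (auto simp: mem_box_cart)

lemma convex_box_ab: "convex (box_ab a b :: (real^'n) set)"
  by (simp add: box_ab_eq_cbox)

lemma compact_box_ab: "compact (box_ab a b :: (real^'n) set)"
  by (simp add: box_ab_eq_cbox)

lemma fpw_idx:
  "fpw a b phi (u::real^'n::{finite,linorder}) = phi (pcol a b 0) +
     (\<Sum>m<CARD('n). (u $ idx m - a) / (b - a) * (phi (pcol a b (Suc m)) - phi (pcol a b m)))"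
proof -
  have "(\<Sum>i\<in>UNIV. (u $ i - a) / (b - a) * (phi (pcol a b (rank i)) - phi (pcol a b (rank i - 1))))
      = (\<Sum>m<CARD('n). (u $ idx m - a) / (b - a) *
           (phi (pcol a b (rank (idx m::'n))) - phi (pcol a b (rank (idx m::'n) - 1))))"
    by (subst sum.reindex_bij_betw[OF bij_betw_idx, symmetric]) (rule refl)
  also have "\<dots> = (\<Sum>m<CARD('n). (u $ idx m - a) / (b - a) * (phi (pcol a b (Suc m)) - phi (pcol a b m)))"
    by (rule sum.cong) (auto simp: rank_idx)
  finally show ?thesis unfolding fpw_def by simp
qed

lemma fpw_affine:
  fixes u v :: "real^'n::{finite,linorder}"
  shows "fpw a b phi ((1 - t) *\<^sub>R u + t *\<^sub>R v) = (1 - t) * fpw a b phi u + t * fpw a b phi v"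
proof -
  define K where "K i = (phi (pcol a b (rank i)) - phi (pcol a b (rank i - 1))) / (b - a)" for i :: 'n
  have f: "fpw a b phi w = phi (pcol a b 0) + (\<Sum>i\<in>UNIV. (w $ i - a) * K i)" for w
    unfolding fpw_def K_def by (simp add: field_simps)
  show ?thesis
    unfolding f by (simp add: algebra_simps sum.distrib sum_distrib_left sum_subtractf)
qed

lemma fpw_pcol:
  assumes "a < b" "k \<le> CARD('n)"
  shows "fpw a b phi (pcol a b k :: real^'n::{finite,linorder}) = phi (pcol a b k)"
proof -
  have "(\<Sum>m<CARD('n). ((pcol a b k :: real^'n::{finite,linorder}) $ idx m - a) / (b - a) *
          (phi (pcol a b (Suc m)) - phi (pcol a b m)))
      = (\<Sum>m<CARD('n). if m \<in> {..<k} then phi (pcol a b (Suc m)) - phi (pcol a b m) else 0)"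
    by (rule sum.cong) (use assms in \<open>auto simp: pcol_idx\<close>)
  also have "\<dots> = (\<Sum>m<k. phi (pcol a b (Suc m)) - phi (pcol a b m))"
  proof -
    have "{..<CARD('n)} \<inter> {..<k} = {..<k}" using assms by auto
    then show ?thesis by (simp only: sum.inter_restrict[OF finite_lessThan, symmetric])
  qed
  also have "\<dots> = phi (pcol a b k) - phi (pcol a b 0)" by (rule sum_lessThan_telescope)
  finally show ?thesis unfolding fpw_idx by simp
qed

text \<open>Padding the scaled coordinates with \<open>1\<close> in front and \<open>0\<close> behind makes their successive
  differences the barycentric coordinates of a decreasing \<open>u\<close> with respect to the columns.\<close>

definition scaled_coord :: "real \<Rightarrow> real \<Rightarrow> real^'n::{finite,linorder} \<Rightarrow> nat \<Rightarrow> real" where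
  "scaled_coord a b u m =
     (if m = 0 then 1 else if m \<le> CARD('n) then (u $ idx (m - 1) - a) / (b - a) else 0)"

definition col_weight :: "real \<Rightarrow> real \<Rightarrow> real^'n::{finite,linorder} \<Rightarrow> nat \<Rightarrow> real" where
  "col_weight a b u k = scaled_coord a b u k - scaled_coord a b u (Suc k)"

lemma col_weight_nonneg:
  assumes "a < b" "antimono (vec_nth (u::real^'n::{finite,linorder}))" "u \<in> box_ab a b" "k \<le> CARD('n)"
  shows "0 \<le> col_weight a b u k"
proof -
  have u: "a \<le> u $ i" "u $ i \<le> b" for i using assms(3) unfolding box_ab_def by auto
  consider "k = 0" | "0 < k" "k < CARD('n)" | "0 < k" "k = CARD('n)" using assms(4) by linarith
  then show ?thesis
  proof cases
    case 1
    have "col_weight a b u 0 = 1 - (u $ idx 0 - a) / (b - a)"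
      by (simp add: col_weight_def scaled_coord_def Suc_le_eq)
    moreover have "(u $ idx 0 - a) / (b - a) \<le> 1" using u assms(1) by simp
    ultimately show ?thesis using 1 by simp
  next
    case 2
    then have "idx (k - 1) \<le> (idx k :: 'n)" by (simp add: idx_le_idx_iff)
    then have "u $ idx k \<le> u $ idx (k - 1)" using antimonoD[OF assms(2)] by blast
    then show ?thesis
      using 2 assms(1) by (simp add: col_weight_def scaled_coord_def divide_right_mono Suc_le_eq)
  next
    case 3
    then have "col_weight a b u k = (u $ idx (k - 1) - a) / (b - a)"
      by (simp add: col_weight_def scaled_coord_def)
    then show ?thesis using u assms(1) by simp
  qed
qed

lemma sum_col_weight: "(\<Sum>k\<le>CARD('n). col_weight a b (u::real^'n::{finite,linorder}) k) = 1"
  unfolding col_weight_def sum_telescope by (simp add: scaled_coord_def)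

lemma sum_col_weight_pcol:
  assumes "a < b"
  shows "(\<Sum>k\<le>CARD('n). col_weight a b (u::real^'n::{finite,linorder}) k *\<^sub>R pcol a b k) = u"
proof (subst vec_eq_iff, intro allI)
  fix i :: 'n
  obtain m where m: "m < CARD('n)" "i = idx m" by (rule obtain_idx)
  let ?w = "col_weight a b u"
  have "(\<Sum>k\<le>CARD('n). ?w k *\<^sub>R pcol a b k) $ i = (\<Sum>k\<le>CARD('n). ?w k * (if k \<le> m then a else b))"
    using m by (simp add: pcol_idx)
  also have "\<dots> = (\<Sum>k\<le>CARD('n). ?w k * b) - (b - a) * (\<Sum>k\<le>CARD('n). if k \<in> {..m} then ?w k else 0)"
    by (simp add: sum_distrib_left sum_subtractf[symmetric] algebra_simps, rule sum.cong, auto simp: algebra_simps)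
  also have "(\<Sum>k\<le>CARD('n). if k \<in> {..m} then ?w k else 0) = (\<Sum>k\<le>m. ?w k)"
  proof -
    have "{..CARD('n)} \<inter> {..m} = {..m}" using m by auto
    then show ?thesis by (simp only: sum.inter_restrict[OF finite_atMost, symmetric])
  qed
  also have "(\<Sum>k\<le>m. ?w k) = 1 - (u $ idx m - a) / (b - a)"
    unfolding col_weight_def sum_telescope using m by (simp add: scaled_coord_def)
  also have "(\<Sum>k\<le>CARD('n). ?w k * b) = b"
    using sum_col_weight[of a b u] by (simp flip: sum_distrib_right)
  also have "b - (b - a) * (1 - (u $ idx m - a) / (b - a)) = u $ i"
    using m assms by (simp add: field_simps)
  finally show "(\<Sum>k\<le>CARD('n). ?w k *\<^sub>R pcol a b k) $ i = u $ i" .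
qed

lemma fpw_eq_sum_col_weight:
  "fpw a b phi (u::real^'n::{finite,linorder}) = (\<Sum>k\<le>CARD('n). col_weight a b u k * phi (pcol a b k))"
proof -
  have by_parts: "(\<Sum>k\<le>N. (t k - t (Suc k)) * c k) =
      t 0 * c 0 + (\<Sum>m<N. t (Suc m) * (c (Suc m) - c m)) - t (Suc N) * c N"
    for N and t c :: "nat \<Rightarrow> real"
    by (induction N) (auto simp: algebra_simps)
  let ?s = "scaled_coord a b u" and ?c = "\<lambda>k. phi (pcol a b k)"
  have "(\<Sum>k\<le>CARD('n). col_weight a b u k * ?c k) =
      ?s 0 * ?c 0 + (\<Sum>m<CARD('n). ?s (Suc m) * (?c (Suc m) - ?c m)) - ?s (Suc CARD('n)) * ?c CARD('n)"
    unfolding col_weight_def by (rule by_parts)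
  also have "\<dots> = fpw a b phi u"
    unfolding fpw_idx by (auto simp: scaled_coord_def Suc_le_eq intro!: sum.cong)
  finally show ?thesis by simp
qed

section \<open>Convex minorants of \<open>\<phi>\<close> lie below \<open>f\<close>\<close>

lemma convex_minorant_permute_le_fpw:
  fixes u :: "real^'n::{finite,linorder}"
  assumes "a < b" and phi: "perm_invariant_on (box_ab a b) phi"
    and g: "convex_on (box_ab a b) g" "\<forall>y\<in>box_ab a b. g y \<le> phi y"
    and u: "antimono (vec_nth u)" "u \<in> box_ab a b" and \<sigma>: "\<sigma> permutes UNIV"
  shows "g (\<chi> i. u $ \<sigma> i) \<le> fpw a b phi u"
proof -
  let ?w = "col_weight a b u"
  let ?q = "\<lambda>k. \<chi> i. pcol a b k $ \<sigma> i"
  have q_box: "?q k \<in> box_ab a b" for k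
    using assms(1) by (intro permute_in_box_ab pcol_in_box_ab) simp
  have w: "0 \<le> ?w k" if "k \<le> CARD('n)" for k
    using col_weight_nonneg[OF assms(1) u that] .
  have "(\<chi> i. u $ \<sigma> i) = (\<Sum>k\<le>CARD('n). ?w k *\<^sub>R ?q k)"
    using sum_col_weight_pcol[OF assms(1), of u] by (simp add: vec_eq_iff)
  also have "g \<dots> \<le> (\<Sum>k\<le>CARD('n). ?w k * g (?q k))"
    by (rule convex_on_sum[OF _ _ g(1)]) (use w q_box sum_col_weight in auto)
  also have "\<dots> \<le> (\<Sum>k\<le>CARD('n). ?w k * phi (pcol a b k))"
  proof (rule sum_mono)
    fix k assume "k \<in> {..CARD('n)}"
    moreover have "phi (?q k) = phi (pcol a b k)"
      using phi \<sigma> pcol_in_box_ab[OF less_imp_le[OF assms(1)]] unfolding perm_invariant_on_def by blast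
    moreover have "g (?q k) \<le> phi (?q k)" using g(2) q_box by blast
    ultimately show "?w k * g (?q k) \<le> ?w k * phi (pcol a b k)"
      using w[of k] by (simp add: mult_left_mono)
  qed
  also have "\<dots> = fpw a b phi u" by (rule fpw_eq_sum_col_weight[symmetric])
  finally show ?thesis .
qed

lemma conv_env_le_fpw:
  fixes u x :: "real^'n::{finite,linorder}"
  assumes "a < b" "perm_invariant_on (box_ab a b) phi"
    and u: "antimono (vec_nth u)" "u \<in> box_ab a b" "majorizes u x"
  shows "conv_env (box_ab a b) (\<lambda>y. ereal (phi y)) x \<le> ereal (fpw a b phi u)"
  unfolding conv_env_def
proof (rule SUP_least)
  let ?P = "{(\<chi> i. u $ \<sigma> i) | \<sigma>. \<sigma> permutes (UNIV::'n set)}"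
  fix g assume "g \<in> {g. convex_on (box_ab a b) g \<and> (\<forall>y\<in>box_ab a b. ereal (g y) \<le> ereal (phi y))}"
  then have g: "convex_on (box_ab a b) g" "\<forall>y\<in>box_ab a b. g y \<le> phi y" by auto
  have "?P \<subseteq> box_ab a b" using permute_in_box_ab[OF u(2)] by blast
  then have "convex hull ?P \<subseteq> box_ab a b" using convex_box_ab by (rule hull_minimal)
  then have "convex_on (convex hull ?P) g" by (rule convex_on_subset[OF g(1) _ convex_convex_hull])
  moreover have "\<forall>p\<in>?P. g p \<le> fpw a b phi u"
    using convex_minorant_permute_le_fpw[OF assms(1,2) g u(1,2)] by blast
  moreover have "x \<in> convex hull ?P" by (rule majorized_in_convex_hull_permutations[OF u(1,3)])
  ultimately have "g x \<le> fpw a b phi u" using convex_on_convex_hull_bound by blast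
  then show "ereal (g x) \<le> ereal (fpw a b phi u)" by simp
qed

section \<open>The optimal value is a convex minorant of \<open>\<phi>\<close> on the vertices\<close>

definition sorted_majorants :: "real \<Rightarrow> real \<Rightarrow> real^'n::{finite,linorder} \<Rightarrow> (real,'n) vec set" where
  "sorted_majorants a b x = {u. majorizes u x \<and> antimono (vec_nth u) \<and> u \<in> box_ab a b}"

lemma sorted_majorants_eq:
  fixes y :: "real^'n::{finite,linorder}"
  shows "sorted_majorants a b y = box_ab a b \<inter> {u. (\<forall>i k. i \<le> k \<longrightarrow> u $ k \<le> u $ i) \<and>
    (\<forall>j. 1 \<le> j \<and> j < CARD('n) \<longrightarrow> sum_largest y j \<le> (\<Sum>k<j. u $ idx k)) \<and>
    (\<Sum>k<CARD('n). u $ idx k) = sum_largest y CARD('n)}"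
proof -
  have "majorizes u y \<longleftrightarrow>
      (\<forall>j. 1 \<le> j \<and> j < CARD('n) \<longrightarrow> sum_largest y j \<le> (\<Sum>k<j. u $ idx k)) \<and>
      (\<Sum>k<CARD('n). u $ idx k) = sum_largest y CARD('n)" if "antimono (vec_nth u)" for u
    unfolding majorizes_iff_sum_largest using sum_largest_antimono[OF that] by auto
  then show ?thesis unfolding sorted_majorants_def antimono_def by auto
qed

lemma compact_sorted_majorants: "compact (sorted_majorants a b (y::real^'n::{finite,linorder}))"
proof -
  have "closed {u :: (real,'n) vec. (\<forall>i k. i \<le> k \<longrightarrow> u $ k \<le> u $ i) \<and>
    (\<forall>j. 1 \<le> j \<and> j < CARD('n) \<longrightarrow> sum_largest y j \<le> (\<Sum>k<j. u $ idx k)) \<and>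
    (\<Sum>k<CARD('n). u $ idx k) = sum_largest y CARD('n)}"
    by (intro closed_Collect_conj closed_Collect_all closed_Collect_imp closed_Collect_le closed_Collect_eq
        continuous_intros) simp_all
  then show ?thesis
    unfolding sorted_majorants_eq by (rule compact_Int_closed[OF compact_box_ab])
qed

definition decr_rearrangement :: "real^'n::{finite,linorder} \<Rightarrow> (real,'n) vec" where
  "decr_rearrangement y = (\<chi> i. dsorted y ! (rank i - 1))"

lemma decr_rearrangement_idx:
  "k < CARD('n) \<Longrightarrow> decr_rearrangement y $ (idx k :: 'n::{finite,linorder}) = dsorted y ! k"
  unfolding decr_rearrangement_def by (simp add: rank_idx)

lemma antimono_decr_rearrangement: "antimono (vec_nth (decr_rearrangement (y::real^'n::{finite,linorder})))"
proof (rule antimonoI)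
  fix i k :: 'n
  assume "i \<le> k"
  moreover obtain p where p: "p < CARD('n)" "i = idx p" by (rule obtain_idx)
  moreover obtain q where q: "q < CARD('n)" "k = idx q" by (rule obtain_idx)
  ultimately show "decr_rearrangement y $ k \<le> decr_rearrangement y $ i"
    by (simp add: idx_le_idx_iff decr_rearrangement_idx dsorted_nth_antimono)
qed

lemma decr_rearrangement_permute:
  fixes y :: "real^'n::{finite,linorder}"
  obtains \<sigma> where "\<sigma> permutes UNIV" "decr_rearrangement y = (\<chi> i. y $ \<sigma> i)"
proof -
  obtain \<pi> where \<pi>: "bij_betw \<pi> {..<CARD('n)} (UNIV::'n set)" "\<And>k. k < CARD('n) \<Longrightarrow> dsorted y ! k = y $ \<pi> k"
    using dsorted_eq_permutation by blast
  let ?\<sigma> = "\<lambda>i::'n. \<pi> (rank i - 1)"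
  have "bij ?\<sigma>"
    using bij_betw_trans[OF rank_minus_one_bij \<pi>(1)] by (simp add: comp_def)
  moreover have "rank i - 1 < CARD('n)" for i :: 'n
    using rank_minus_one_bij[where 'n='n] by (auto simp: bij_betw_def)
  then have "decr_rearrangement y = (\<chi> i. y $ ?\<sigma> i)"
    unfolding decr_rearrangement_def by (simp add: \<pi>(2))
  ultimately show thesis using that bij_imp_permutes by blast
qed

lemma dsorted_decr_rearrangement: "dsorted (decr_rearrangement (y::real^'n::{finite,linorder})) = dsorted y"
  unfolding dsorted_of_antimono[OF antimono_decr_rearrangement]
  by (rule nth_equalityI) (auto simp: decr_rearrangement_idx)

lemma decr_rearrangement_in_sorted_majorants:
  assumes "y \<in> box_ab a b"
  shows "decr_rearrangement y \<in> sorted_majorants a b y"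
proof -
  obtain \<sigma> where "decr_rearrangement y = (\<chi> i. y $ \<sigma> i)" by (rule decr_rearrangement_permute)
  then have "decr_rearrangement y \<in> box_ab a b" using permute_in_box_ab[OF assms] by simp
  then show ?thesis
    by (simp add: sorted_majorants_def majorizes_def dsorted_decr_rearrangement antimono_decr_rearrangement)
qed

lemma sorted_majorants_convex_comb:
  fixes x y u v :: "real^'n::{finite,linorder}"
  assumes "u \<in> sorted_majorants a b x" "v \<in> sorted_majorants a b y" "0 \<le> t" "t \<le> 1"
  shows "(1 - t) *\<^sub>R u + t *\<^sub>R v \<in> sorted_majorants a b ((1 - t) *\<^sub>R x + t *\<^sub>R y)"
proof -
  let ?w = "(1 - t) *\<^sub>R u + t *\<^sub>R v" and ?z = "(1 - t) *\<^sub>R x + t *\<^sub>R y"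
  have u: "majorizes u x" "antimono (vec_nth u)" "u \<in> box_ab a b"
    and v: "majorizes v y" "antimono (vec_nth v)" "v \<in> box_ab a b"
    using assms(1,2) unfolding sorted_majorants_def by auto
  have "?w \<in> box_ab a b" using convexD_alt[OF convex_box_ab u(3) v(3)] assms(3,4) by simp
  moreover have w: "antimono (vec_nth ?w)"
    using u(2) v(2) assms(3,4) by (auto simp: antimono_def intro!: add_mono mult_left_mono)
  moreover have sum_w: "sum_largest ?w j = (1 - t) * sum_largest u j + t * sum_largest v j"
    if "j \<le> CARD('n)" for j
    using that by (simp add: sum_largest_antimono u(2) v(2) w sum.distrib sum_distrib_left)
  have "majorizes ?w ?z" unfolding majorizes_iff_sum_largest
  proof (intro conjI allI impI)
    fix j assume j: "1 \<le> j \<and> j < CARD('n)"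
    have "sum_largest ?z j \<le> (1 - t) * sum_largest x j + t * sum_largest y j"
      using j assms(3,4) by (intro sum_largest_convex) auto
    also have "\<dots> \<le> (1 - t) * sum_largest u j + t * sum_largest v j"
      using u(1) v(1) j assms(3,4) by (intro add_mono mult_left_mono) (auto simp: majorizes_iff_sum_largest)
    finally show "sum_largest ?z j \<le> sum_largest ?w j" using sum_w j by simp
  next
    show "sum_largest ?w CARD('n) = sum_largest ?z CARD('n)"
      using u(1) v(1) sum_w[of "CARD('n)"]
      by (simp add: majorizes_iff_sum_largest sum_largest_CARD sum.distrib sum_distrib_left)
  qed
  ultimately show ?thesis unfolding sorted_majorants_def by simp
qed

definition fpw_argmin :: "real \<Rightarrow> real \<Rightarrow> (real^'n::{finite,linorder} \<Rightarrow> real) \<Rightarrow> (real,'n) vec \<Rightarrow> (real,'n) vec" where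
  "fpw_argmin a b phi y =
     (SOME u. u \<in> sorted_majorants a b y \<and> (\<forall>v\<in>sorted_majorants a b y. fpw a b phi u \<le> fpw a b phi v))"

lemma fpw_argmin:
  fixes y :: "real^'n::{finite,linorder}"
  assumes "a < b" "y \<in> box_ab a b"
  shows "fpw_argmin a b phi y \<in> sorted_majorants a b y"
    and "\<And>v. v \<in> sorted_majorants a b y \<Longrightarrow> fpw a b phi (fpw_argmin a b phi y) \<le> fpw a b phi v"
proof -
  have "continuous_on (sorted_majorants a b y) (fpw a b phi)"
    using assms(1) unfolding fpw_def[abs_def] by (intro continuous_intros) auto
  then have "\<exists>u\<in>sorted_majorants a b y. \<forall>v\<in>sorted_majorants a b y. fpw a b phi u \<le> fpw a b phi v"
    using continuous_attains_inf[OF compact_sorted_majorants] decr_rearrangement_in_sorted_majorants[OF assms(2)]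
    by blast
  then have "fpw_argmin a b phi y \<in> sorted_majorants a b y \<and>
      (\<forall>v\<in>sorted_majorants a b y. fpw a b phi (fpw_argmin a b phi y) \<le> fpw a b phi v)"
    unfolding fpw_argmin_def by (rule someI2_bex) blast
  then show "fpw_argmin a b phi y \<in> sorted_majorants a b y"
    and "\<And>v. v \<in> sorted_majorants a b y \<Longrightarrow> fpw a b phi (fpw_argmin a b phi y) \<le> fpw a b phi v"
    by auto
qed

lemma convex_on_fpw_argmin:
  assumes "a < b"
  shows "convex_on (box_ab a b) (\<lambda>y::real^'n::{finite,linorder}. fpw a b phi (fpw_argmin a b phi y))"
proof (rule convex_onI[OF _ convex_box_ab])
  fix t :: real and x y :: "(real,'n) vec"
  assume t: "0 < t" "t < 1" and xy: "x \<in> box_ab a b" "y \<in> box_ab a b"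
  let ?z = "(1 - t) *\<^sub>R x + t *\<^sub>R y"
  let ?u = "fpw_argmin a b phi x" and ?v = "fpw_argmin a b phi y"
  have "?z \<in> box_ab a b" using convexD_alt[OF convex_box_ab xy] t by simp
  moreover have "(1 - t) *\<^sub>R ?u + t *\<^sub>R ?v \<in> sorted_majorants a b ?z"
    using fpw_argmin(1)[OF assms xy(1)] fpw_argmin(1)[OF assms xy(2)] t
    by (intro sorted_majorants_convex_comb) auto
  ultimately have "fpw a b phi (fpw_argmin a b phi ?z) \<le> fpw a b phi ((1 - t) *\<^sub>R ?u + t *\<^sub>R ?v)"
    using fpw_argmin(2)[OF assms] by blast
  then show "fpw a b phi (fpw_argmin a b phi ?z) \<le> (1 - t) * fpw a b phi ?u + t * fpw a b phi ?v"
    by (simp add: fpw_affine)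
qed

lemma antimono_vertex_eq_pcol:
  fixes w :: "real^'n::{finite,linorder}"
  assumes "a < b" "w \<in> vert_ab a b" "antimono (vec_nth w)"
  obtains k where "k \<le> CARD('n)" "w = pcol a b k"
proof -
  define D where "D = {m. m < CARD('n) \<and> w $ idx m = b}"
  have D_down: "m' \<in> D" if "m \<in> D" "m' \<le> m" for m m'
  proof -
    have "idx m' \<le> (idx m :: 'n)" using that unfolding D_def by (simp add: idx_le_idx_iff)
    then have "b \<le> w $ idx m'" using that antimonoD[OF assms(3)] unfolding D_def by fastforce
    moreover have "w $ idx m' = a \<or> w $ idx m' = b" using assms(2) unfolding vert_ab_def by blast
    moreover have "m' < CARD('n)" using that unfolding D_def by simp
    ultimately show ?thesis using assms(1) unfolding D_def by auto
  qed
  have D: "D = {..<card D}"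
  proof (cases "D = {}")
    case False
    have "finite D" unfolding D_def by simp
    then have "D = {..Max D}" using D_down Max_ge Max_in[OF _ False] by auto
    then show ?thesis by (metis card_atMost lessThan_Suc_atMost)
  qed simp
  have "card D \<le> CARD('n)"
    using card_mono[of "{..<CARD('n)}" D] by (auto simp: D_def)
  moreover have "w = pcol a b (card D)"
  proof (subst vec_eq_iff, intro allI)
    fix i :: 'n
    obtain m where m: "m < CARD('n)" "i = idx m" by (rule obtain_idx)
    have "m \<in> D \<longleftrightarrow> m < card D" using D by auto
    then show "w $ i = pcol a b (card D) $ i"
      using m assms(1,2) by (auto simp: pcol_idx D_def vert_ab_def not_le)
  qed
  ultimately show thesis using that by blast
qed

lemma fpw_argmin_le_vertex:
  fixes v :: "real^'n::{finite,linorder}"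
  assumes "a < b" "perm_invariant_on (box_ab a b) phi" "v \<in> box_ab a b" "v \<in> vert_ab a b"
  shows "fpw a b phi (fpw_argmin a b phi v) \<le> phi v"
proof -
  let ?w = "decr_rearrangement v"
  obtain \<sigma> where \<sigma>: "\<sigma> permutes UNIV" "?w = (\<chi> i. v $ \<sigma> i)"
    by (rule decr_rearrangement_permute)
  have "?w \<in> vert_ab a b" using assms(4) unfolding \<sigma>(2) vert_ab_def by simp
  then obtain k where k: "k \<le> CARD('n)" "?w = pcol a b k"
    using antimono_vertex_eq_pcol[OF assms(1) _ antimono_decr_rearrangement] by blast
  have "fpw a b phi (fpw_argmin a b phi v) \<le> fpw a b phi ?w"
    using fpw_argmin(2)[OF assms(1,3)] decr_rearrangement_in_sorted_majorants[OF assms(3)] by blast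
  also have "\<dots> = phi ?w" unfolding k(2) by (rule fpw_pcol[OF assms(1) k(1)])
  also have "\<dots> = phi v"
    using assms(2,3) \<sigma> unfolding perm_invariant_on_def by simp
  finally show ?thesis .
qed

lemma fpw_argmin_le_conv_env_vertices:
  fixes x :: "real^'n::{finite,linorder}"
  assumes "a < b" "perm_invariant_on (box_ab a b) phi"
  shows "ereal (fpw a b phi (fpw_argmin a b phi x))
    \<le> conv_env (box_ab a b) (\<lambda>y. if y \<in> vert_ab a b then ereal (phi y) else \<infinity>) x"
  unfolding conv_env_def
proof (rule SUP_upper, intro CollectI conjI ballI)
  show "convex_on (box_ab a b) (\<lambda>y. fpw a b phi (fpw_argmin a b phi y))"
    by (rule convex_on_fpw_argmin[OF assms(1)])
  fix y :: "(real,'n) vec"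
  assume "y \<in> box_ab a b"
  then show "ereal (fpw a b phi (fpw_argmin a b phi y)) \<le> (if y \<in> vert_ab a b then ereal (phi y) else \<infinity>)"
    using fpw_argmin_le_vertex[OF assms] by simp
qed

theorem mainTheorem16:
  fixes a b :: real and phi :: "real^'n::{finite,linorder} \<Rightarrow> real"
  assumes "a < b"
    and "perm_invariant_on (box_ab a b) phi"
    and "\<forall>x\<in>box_ab a b. conv_env (box_ab a b) (\<lambda>y. ereal (phi y)) x
           = conv_env (box_ab a b) (\<lambda>y. if y \<in> vert_ab a b then ereal (phi y) else \<infinity>) x"
    and "x \<in> box_ab a b"
  shows "\<exists>u. (majorizes u x \<and> (\<forall>i k. i \<le> k \<longrightarrow> u $ k \<le> u $ i) \<and> (\<forall>i. a \<le> u $ i \<and> u $ i \<le> b))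
           \<and> (\<forall>v. majorizes v x \<and> (\<forall>i k. i \<le> k \<longrightarrow> v $ k \<le> v $ i) \<and> (\<forall>i. a \<le> v $ i \<and> v $ i \<le> b)
                  \<longrightarrow> fpw a b phi u \<le> fpw a b phi v)
           \<and> conv_env (box_ab a b) (\<lambda>y. ereal (phi y)) x = ereal (fpw a b phi u)"
proof -
  let ?u = "fpw_argmin a b phi x"
  have feasible_iff: "v \<in> sorted_majorants a b x \<longleftrightarrow>
      majorizes v x \<and> (\<forall>i k. i \<le> k \<longrightarrow> v $ k \<le> v $ i) \<and> (\<forall>i. a \<le> v $ i \<and> v $ i \<le> b)" for v
    unfolding sorted_majorants_def box_ab_def antimono_def by auto
  have u: "majorizes ?u x" "antimono (vec_nth ?u)" "?u \<in> box_ab a b"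
    using fpw_argmin(1)[OF assms(1,4)] unfolding sorted_majorants_def by auto
  have "conv_env (box_ab a b) (\<lambda>y. ereal (phi y)) x \<le> ereal (fpw a b phi ?u)"
    using conv_env_le_fpw[OF assms(1,2) u(2,3,1)] .
  moreover have "ereal (fpw a b phi ?u) \<le> conv_env (box_ab a b) (\<lambda>y. ereal (phi y)) x"
    using fpw_argmin_le_conv_env_vertices[OF assms(1,2)] assms(3,4) by simp
  ultimately show ?thesis
    using fpw_argmin[OF assms(1,4)] feasible_iff by (intro exI[of _ ?u]) (simp add: order_antisym)
qed

end
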